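(* $PF<_c FLO$, i.e. $PF\le_c FLO$ and $FLO\not\le_c PF$.
   Context: Conventions: every structure is for a finite relational language and has universe a subset of $\omega$; a class of structures is a collection of structures for one fixed finite relational language closed under isomorphism. $D(\mathcal{A})$ is the atomic diagram of $\mathcal{A}$. A computable transformation from $K$ to $K'$ is a c.e. set $\Phi$ of pairs $(\alpha,\varphi)$, $\alpha$ a finite subset of the atomic diagram of a finite structure in the language of $K$, $\varphi$ an atomic sentence or negation of one in the language of $K'$, such that for every $\mathcal{A}\in K$, $\{\varphi:(\exists\alpha\subseteq D(\mathcal{A}))(\alpha,\varphi)\in\Phi\}=D(\mathcal{B})$ for some $\mathcal{B}\in K'$, written $\Phi(\mathcal{A})=\mathcal{B}$. A computable embedding is a computable transformation with $\mathcal{A}\cong\mathcal{A}'\iff\Phi(\mathcal{A})\cong\Phi(\mathcal{A}')$ for all $\mathcal{A},\mathcal{A}'\in K$. $K\le_c K'$ means a computable embedding of $K$ into $K'$ exists; $K<_c K'$ means $K\le_c K'$ and $K'\not\le_c K$. $PF$ is the class of all finite fields of prime order (with addition, multiplication, $0$, $1$ represented by relations: graphs of the operations and unary predicates). $FLO$ is the class of all finite linear orders (language $\{<\}$). *)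

theory Defs
  imports Main "HOL-Library.Nat_Bijection" "HOL-Computational_Algebra.Primes"
begin

datatype recf = Zr | Sc | Pj nat | Cn recf "recf list" | Pr recf recf | Mn recf

inductive recf_eval :: "recf \<Rightarrow> nat list \<Rightarrow> nat \<Rightarrow> bool" where
  ev_Zr: "recf_eval Zr xs 0"
| ev_Sc: "recf_eval Sc (x # xs) (Suc x)"
| ev_Pj: "i < length xs \<Longrightarrow> recf_eval (Pj i) xs (xs ! i)"
| ev_Cn: "length ys = length gs \<Longrightarrow> (\<forall>i<length gs. recf_eval (gs ! i) xs (ys ! i))
          \<Longrightarrow> recf_eval f ys z \<Longrightarrow> recf_eval (Cn f gs) xs z"
| ev_Pr0: "recf_eval f xs y \<Longrightarrow> recf_eval (Pr f g) (0 # xs) y"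
| ev_PrS: "recf_eval (Pr f g) (n # xs) y \<Longrightarrow> recf_eval g (n # y # xs) z
          \<Longrightarrow> recf_eval (Pr f g) (Suc n # xs) z"
| ev_Mn: "recf_eval f (n # xs) 0 \<Longrightarrow> (\<forall>m<n. \<exists>y. recf_eval f (m # xs) y \<and> 0 < y)
          \<Longrightarrow> recf_eval (Mn f) xs n"

definition ce :: "nat set \<Rightarrow> bool" where
  "ce S \<longleftrightarrow> (\<exists>f. S = {n. \<exists>y. recf_eval f [n] y})"

text \<open>A language is the list of arities of its relation symbols (symbol i has arity L!i).\<close>
type_synonym lang = "nat list"

record strc =
  univ :: "nat set"
  rel :: "nat \<Rightarrow> nat list set"

definition tuples :: "nat set \<Rightarrow> nat \<Rightarrow> nat list set" where
  "tuples U n = {xs. length xs = n \<and> set xs \<subseteq> U}"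

definition is_struct :: "lang \<Rightarrow> strc \<Rightarrow> bool" where
  "is_struct L A \<longleftrightarrow> univ A \<noteq> {} \<and>
     (\<forall>i<length L. rel A i \<subseteq> tuples (univ A) (L ! i)) \<and>
     (\<forall>i. length L \<le> i \<longrightarrow> rel A i = {})"

definition iso :: "lang \<Rightarrow> strc \<Rightarrow> strc \<Rightarrow> bool" where
  "iso L A B \<longleftrightarrow> (\<exists>f. bij_betw f (univ A) (univ B) \<and>
     (\<forall>i<length L. \<forall>xs\<in>tuples (univ A) (L ! i). xs \<in> rel A i \<longleftrightarrow> map f xs \<in> rel B i))"

text \<open>Atomic sentences, with constants for the natural numbers: equalities and relation atoms.
  A literal is a pair (polarity, atom): True = the atom, False = its negation.\<close>
datatype atom = Eq nat nat | Rl nat "nat list"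

type_synonym lit = "bool \<times> atom"

fun lang_lit :: "lang \<Rightarrow> lit \<Rightarrow> bool" where
  "lang_lit L (b, Eq a c) = True"
| "lang_lit L (b, Rl i xs) = (i < length L \<and> length xs = L ! i)"

definition diagram :: "lang \<Rightarrow> strc \<Rightarrow> lit set" where
  "diagram L A =
     {(True, Eq a a) | a. a \<in> univ A}
   \<union> {(False, Eq a c) | a c. a \<in> univ A \<and> c \<in> univ A \<and> a \<noteq> c}
   \<union> {(True, Rl i xs) | i xs. i < length L \<and> xs \<in> tuples (univ A) (L ! i) \<and> xs \<in> rel A i}
   \<union> {(False, Rl i xs) | i xs. i < length L \<and> xs \<in> tuples (univ A) (L ! i) \<and> xs \<notin> rel A i}"

fun atom_code :: "atom \<Rightarrow> nat" where
  "atom_code (Eq a c) = sum_encode (Inl (prod_encode (a, c)))"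
| "atom_code (Rl i xs) = sum_encode (Inr (prod_encode (i, list_encode xs)))"

definition lit_code :: "lit \<Rightarrow> nat" where
  "lit_code l = prod_encode (if fst l then 1 else 0, atom_code (snd l))"

definition pair_code :: "lit set \<times> lit \<Rightarrow> nat" where
  "pair_code p = prod_encode (set_encode (lit_code ` fst p), lit_code (snd p))"

definition apply_trans :: "(lit set \<times> lit) set \<Rightarrow> lang \<Rightarrow> strc \<Rightarrow> lit set" where
  "apply_trans \<Phi> L A = {\<phi>. \<exists>\<alpha>. \<alpha> \<subseteq> diagram L A \<and> (\<alpha>, \<phi>) \<in> \<Phi>}"

definition comp_trans ::
  "strc set \<Rightarrow> lang \<Rightarrow> strc set \<Rightarrow> lang \<Rightarrow> (lit set \<times> lit) set \<Rightarrow> bool" where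
  "comp_trans K L K' L' \<Phi> \<longleftrightarrow>
     ce (pair_code ` \<Phi>) \<and>
     (\<forall>(\<alpha>, \<phi>)\<in>\<Phi>. finite \<alpha> \<and>
        (\<exists>F. is_struct L F \<and> finite (univ F) \<and> \<alpha> \<subseteq> diagram L F) \<and> lang_lit L' \<phi>) \<and>
     (\<forall>A\<in>K. \<exists>B\<in>K'. apply_trans \<Phi> L A = diagram L' B)"

definition comp_emb ::
  "strc set \<Rightarrow> lang \<Rightarrow> strc set \<Rightarrow> lang \<Rightarrow> (lit set \<times> lit) set \<Rightarrow> bool" where
  "comp_emb K L K' L' \<Phi> \<longleftrightarrow> comp_trans K L K' L' \<Phi> \<and>
     (\<forall>A\<in>K. \<forall>A'\<in>K. \<forall>B\<in>K'. \<forall>B'\<in>K'.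
        apply_trans \<Phi> L A = diagram L' B \<longrightarrow> apply_trans \<Phi> L A' = diagram L' B' \<longrightarrow>
        (iso L A A' \<longleftrightarrow> iso L' B B'))"

definition c_le :: "strc set \<Rightarrow> lang \<Rightarrow> strc set \<Rightarrow> lang \<Rightarrow> bool" where
  "c_le K L K' L' \<longleftrightarrow> (\<exists>\<Phi>. comp_emb K L K' L' \<Phi>)"

definition c_lt :: "strc set \<Rightarrow> lang \<Rightarrow> strc set \<Rightarrow> lang \<Rightarrow> bool" where
  "c_lt K L K' L' \<longleftrightarrow> c_le K L K' L' \<and> \<not> c_le K' L' K L"

text \<open>Language of fields: 0 = graph of +, 1 = graph of *, 2 = {0}, 3 = {1}.\<close>
definition L_PF :: lang where "L_PF = [3, 3, 1, 1]"

definition Zp :: "nat \<Rightarrow> strc" where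
  "Zp p = \<lparr> univ = {0..<p},
     rel = (\<lambda>i. if i = 0 then {[a, b, (a + b) mod p] | a b. a < p \<and> b < p}
              else if i = 1 then {[a, b, (a * b) mod p] | a b. a < p \<and> b < p}
              else if i = 2 then {[0]}
              else if i = 3 then {[1]}
              else {}) \<rparr>"

definition PF :: "strc set" where
  "PF = {A. is_struct L_PF A \<and> (\<exists>p::nat. prime p \<and> iso L_PF (Zp p) A)}"

definition L_FLO :: lang where "L_FLO = [2]"

definition FLO :: "strc set" where
  "FLO = {A. is_struct L_FLO A \<and> finite (univ A) \<and>
     (\<forall>a\<in>univ A. [a, a] \<notin> rel A 0) \<and>
     (\<forall>a\<in>univ A. \<forall>b\<in>univ A. \<forall>c\<in>univ A. [a, b] \<in> rel A 0 \<longrightarrow> [b, c] \<in> rel A 0 \<longrightarrow> [a, c] \<in> rel A 0) \<and>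
     (\<forall>a\<in>univ A. \<forall>b\<in>univ A. a = b \<or> [a, b] \<in> rel A 0 \<or> [b, a] \<in> rel A 0)}"

end

theory Submission
  imports Defs "HOL-Library.Infinite_Set"
begin

(* The embedding of PF into FLO sends a structure to the natural order of the naturals restricted
   to its universe. It only reads the equalities and inequalities of the atomic diagram, and two
   prime fields, like two finite linear orders, are isomorphic iff they have the same size. Its
   enumeration is c.e. because the set of codes is a union of ranges of six primitive recursive
   functions of two variables.

   Conversely, every computable transformation is monotone in the atomic diagram. The diagram of
   the one-element order is contained in that of the two-element order, so an embedding of FLO
   into PF would yield prime fields B1, B2 with D(B1) a subset of D(B2). Then B1 is a
   substructure of B2 containing 1 and closed under adding 1, and since 1 generates the additive
   group of a prime field, B1 = B2; but the two orders are not isomorphic. *)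

section \<open>Partial recursive functions\<close>

lemma recf_eval_functional: "recf_eval f xs y \<Longrightarrow> recf_eval f xs z \<Longrightarrow> y = z"
proof (induction f xs y arbitrary: z rule: recf_eval.induct)
  case (ev_Zr xs)
  from ev_Zr.prems show ?case by cases auto
next
  case (ev_Sc x xs)
  from ev_Sc.prems show ?case by cases auto
next
  case (ev_Pj i xs)
  from ev_Pj.prems show ?case by cases auto
next
  case (ev_Cn ys gs xs f y)
  from ev_Cn.prems show ?case
  proof cases
    case (ev_Cn ys')
    have "ys' = ys"
      by (rule nth_equalityI) (use ev_Cn ev_Cn.hyps ev_Cn.IH in auto)
    with ev_Cn ev_Cn.IH show ?thesis by auto
  qed
next
  case (ev_Pr0 f xs y g)
  from ev_Pr0.prems show ?case by cases (use ev_Pr0 in auto)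
next
  case (ev_PrS f g n xs y z)
  from ev_PrS.prems show ?case by cases (use ev_PrS in fastforce)
next
  case (ev_Mn f n xs)
  from ev_Mn.prems show ?case
  proof cases
    case ev_Mn
    show ?thesis
    proof (rule linorder_cases[of n z])
      assume "n < z"
      with ev_Mn ev_Mn.IH(1) show ?thesis by fastforce
    next
      assume "z < n"
      with ev_Mn ev_Mn.IH(2) show ?thesis by fastforce
    qed
  qed
qed

lemma recf_eval_Cn1:
  "recf_eval f [y] z \<Longrightarrow> recf_eval g xs y \<Longrightarrow> recf_eval (Cn f [g]) xs z"
  by (rule ev_Cn[where ys = "[y]"]) (auto simp: less_Suc_eq)

lemma recf_eval_Cn2:
  "recf_eval f [y1, y2] z \<Longrightarrow> recf_eval g1 xs y1 \<Longrightarrow> recf_eval g2 xs y2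
   \<Longrightarrow> recf_eval (Cn f [g1, g2]) xs z"
  by (rule ev_Cn[where ys = "[y1, y2]"]) (auto simp: less_Suc_eq)

lemma recf_eval_Cn3:
  "recf_eval f [y1, y2, y3] z \<Longrightarrow> recf_eval g1 xs y1 \<Longrightarrow> recf_eval g2 xs y2
   \<Longrightarrow> recf_eval g3 xs y3 \<Longrightarrow> recf_eval (Cn f [g1, g2, g3]) xs z"
  by (rule ev_Cn[where ys = "[y1, y2, y3]"]) (auto simp: less_Suc_eq)

lemma recf_eval_Pj0: "recf_eval (Pj 0) (x # xs) x"
  using ev_Pj[of 0 "x # xs"] by simp

lemma recf_eval_Pj1: "recf_eval (Pj 1) (x0 # x # xs) x"
  using ev_Pj[of 1 "x0 # x # xs"] by simp

lemma recf_eval_Pj2: "recf_eval (Pj 2) (x0 # x1 # x # xs) x"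
  using ev_Pj[of 2 "x0 # x1 # x # xs"] by simp

lemma recf_eval_Pj3: "recf_eval (Pj 3) (x0 # x1 # x2 # x # xs) x"
  using ev_Pj[of 3 "x0 # x1 # x2 # x # xs"] by simp

lemma recf_eval_subst: "recf_eval f xs y \<Longrightarrow> y = z \<Longrightarrow> recf_eval f xs z"
  by simp

definition r_one :: recf where "r_one = Cn Sc [Zr]"

lemma r_one_eval: "recf_eval r_one xs 1"
  unfolding r_one_def by (rule recf_eval_Cn1) (auto intro: ev_Zr ev_Sc[of 0 "[]", simplified])

definition r_const :: "bool \<Rightarrow> recf" where "r_const b = (if b then r_one else Zr)"

lemma r_const_eval: "recf_eval (r_const b) xs (if b then 1 else 0)"
  unfolding r_const_def by (auto intro: r_one_eval[simplified] ev_Zr)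

definition r_add :: recf where "r_add = Pr (Pj 0) (Cn Sc [Pj 1])"

lemma r_add_eval: "recf_eval r_add [m, n] (m + n)"
proof (induction m)
  case 0
  show ?case unfolding r_add_def by (rule ev_Pr0) (simp add: recf_eval_Pj0)
next
  case (Suc m)
  show ?case unfolding r_add_def
    by (rule ev_PrS[OF Suc[unfolded r_add_def]], rule recf_eval_subst,
        rule recf_eval_Cn1, rule ev_Sc, rule recf_eval_Pj1, simp)
qed

definition r_mult :: recf where "r_mult = Pr Zr (Cn r_add [Pj 1, Pj 2])"

lemma r_mult_eval: "recf_eval r_mult [m, n] (m * n)"
proof (induction m)
  case 0
  show ?case unfolding r_mult_def by (rule ev_Pr0) (simp add: ev_Zr)
next
  case (Suc m)
  show ?case unfolding r_mult_def
    by (rule ev_PrS[OF Suc[unfolded r_mult_def]], rule recf_eval_subst, rule recf_eval_Cn2,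
        rule r_add_eval, rule recf_eval_Pj1, rule recf_eval_Pj2, simp)
qed

definition r_pred :: recf where "r_pred = Pr Zr (Pj 0)"

lemma r_pred_eval: "recf_eval r_pred [n] (n - 1)"
proof (induction n)
  case 0
  show ?case unfolding r_pred_def by (rule ev_Pr0) (simp add: ev_Zr)
next
  case (Suc n)
  show ?case unfolding r_pred_def
    by (rule recf_eval_subst, rule ev_PrS[OF Suc[unfolded r_pred_def]], rule recf_eval_Pj0, simp)
qed

definition r_sub :: recf where "r_sub = Cn (Pr (Pj 0) (Cn r_pred [Pj 1])) [Pj 1, Pj 0]"

lemma r_sub_eval: "recf_eval r_sub [m, n] (m - n)"
proof -
  have "recf_eval (Pr (Pj 0) (Cn r_pred [Pj 1])) [k, m] (m - k)" for k
  proof (induction k)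
    case 0
    show ?case by (rule ev_Pr0) (simp add: recf_eval_Pj0)
  next
    case (Suc k)
    show ?case
      by (rule ev_PrS[OF Suc], rule recf_eval_subst, rule recf_eval_Cn1,
          rule r_pred_eval, rule recf_eval_Pj1, simp)
  qed
  then show ?thesis
    unfolding r_sub_def by (rule recf_eval_Cn2) (rule recf_eval_Pj1, rule recf_eval_Pj0)
qed

definition r_dist :: recf where "r_dist = Cn r_add [r_sub, Cn r_sub [Pj 1, Pj 0]]"

lemma r_dist_eval: "recf_eval r_dist [m, n] ((m - n) + (n - m))"
  unfolding r_dist_def
  by (rule recf_eval_Cn2, rule r_add_eval, rule r_sub_eval,
      rule recf_eval_Cn2, rule r_sub_eval, rule recf_eval_Pj1, rule recf_eval_Pj0)

definition r_pow2 :: recf where "r_pow2 = Pr r_one (Cn r_add [Pj 1, Pj 1])"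

lemma r_pow2_eval: "recf_eval r_pow2 [n] (2 ^ n)"
proof (induction n)
  case 0
  show ?case unfolding r_pow2_def by (rule ev_Pr0, rule recf_eval_subst, rule r_one_eval, simp)
next
  case (Suc n)
  show ?case unfolding r_pow2_def
    by (rule ev_PrS[OF Suc[unfolded r_pow2_def]], rule recf_eval_subst, rule recf_eval_Cn2,
        rule r_add_eval, rule recf_eval_Pj1, rule recf_eval_Pj1, simp)
qed

definition r_triangle :: recf where "r_triangle = Pr Zr (Cn Sc [Cn r_add [Pj 0, Pj 1]])"

lemma r_triangle_eval: "recf_eval r_triangle [n] (triangle n)"
proof (induction n)
  case 0
  show ?case unfolding r_triangle_def by (rule ev_Pr0) (simp add: ev_Zr)
next
  case (Suc n)
  show ?case unfolding r_triangle_def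
    by (rule ev_PrS[OF Suc[unfolded r_triangle_def]], rule recf_eval_subst, rule recf_eval_Cn1,
        rule ev_Sc, rule recf_eval_Cn2, rule r_add_eval, rule recf_eval_Pj0, rule recf_eval_Pj1, simp)
qed

definition r_prod_encode :: recf where "r_prod_encode = Cn r_add [Cn r_triangle [r_add], Pj 0]"

lemma r_prod_encode_eval: "recf_eval r_prod_encode [m, n] (prod_encode (m, n))"
  unfolding r_prod_encode_def
  by (rule recf_eval_subst, rule recf_eval_Cn2, rule r_add_eval, rule recf_eval_Cn1,
      rule r_triangle_eval, rule r_add_eval, rule recf_eval_Pj0, simp add: prod_encode_def)

definition r_double :: recf where "r_double = Cn r_add [Pj 0, Pj 0]"

lemma r_double_eval: "recf_eval r_double [n] (2 * n)"
  unfolding r_double_def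
  by (rule recf_eval_subst, rule recf_eval_Cn2, rule r_add_eval, rule recf_eval_Pj0,
      rule recf_eval_Pj0, simp)

(* The codes below unfold the definitions of Nat_Bijection: sum_encode (Inl x) = 2 x,
   sum_encode (Inr x) = 2 x + 1, list_encode [a, c] = prod_encode (a, prod_encode (c, 0) + 1) + 1
   and set_encode {n} = 2 ^ n. *)

definition r_code_Eq :: "bool \<Rightarrow> recf \<Rightarrow> recf \<Rightarrow> recf" where
  "r_code_Eq b A C = Cn r_prod_encode [r_const b, Cn r_double [Cn r_prod_encode [A, C]]]"

lemma r_code_Eq_eval:
  "recf_eval A xs a \<Longrightarrow> recf_eval C xs c \<Longrightarrow> recf_eval (r_code_Eq b A C) xs (lit_code (b, Eq a c))"
  unfolding r_code_Eq_def
  by (rule recf_eval_subst, rule recf_eval_Cn2, rule r_prod_encode_eval, rule r_const_eval,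
      rule recf_eval_Cn1, rule r_double_eval, rule recf_eval_Cn2, rule r_prod_encode_eval,
      assumption, assumption, simp add: lit_code_def sum_encode_def)

definition r_code_Rl0 :: "bool \<Rightarrow> recf \<Rightarrow> recf \<Rightarrow> recf" where
  "r_code_Rl0 b A C = Cn r_prod_encode [r_const b, Cn Sc [Cn r_double [Cn r_prod_encode
     [Zr, Cn Sc [Cn r_prod_encode [A, Cn Sc [Cn r_prod_encode [C, Zr]]]]]]]]"

lemma r_code_Rl0_eval:
  "recf_eval A xs a \<Longrightarrow> recf_eval C xs c \<Longrightarrow> recf_eval (r_code_Rl0 b A C) xs (lit_code (b, Rl 0 [a, c]))"
  unfolding r_code_Rl0_def
  by (rule recf_eval_subst, rule recf_eval_Cn2, rule r_prod_encode_eval, rule r_const_eval,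
      rule recf_eval_Cn1, rule ev_Sc, rule recf_eval_Cn1, rule r_double_eval,
      rule recf_eval_Cn2, rule r_prod_encode_eval, rule ev_Zr, rule recf_eval_Cn1, rule ev_Sc,
      rule recf_eval_Cn2, rule r_prod_encode_eval, assumption,
      rule recf_eval_Cn1, rule ev_Sc, rule recf_eval_Cn2, rule r_prod_encode_eval, assumption, rule ev_Zr,
      simp add: lit_code_def sum_encode_def)

definition r_code_pair :: "recf \<Rightarrow> recf \<Rightarrow> recf" where
  "r_code_pair L1 L2 = Cn r_prod_encode [Cn r_pow2 [L1], L2]"

lemma r_code_pair_eval:
  "recf_eval L1 xs (lit_code l1) \<Longrightarrow> recf_eval L2 xs (lit_code l2) \<Longrightarrow>
   recf_eval (r_code_pair L1 L2) xs (pair_code ({l1}, l2))"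
  unfolding r_code_pair_def
  by (rule recf_eval_subst, rule recf_eval_Cn2, rule r_prod_encode_eval, rule recf_eval_Cn1,
      rule r_pow2_eval, assumption, assumption, simp add: pair_code_def set_encode_def)

definition r_succ_sum :: recf where "r_succ_sum = Cn Sc [Cn r_add [Pj 0, Pj 1]]"

lemma r_succ_sum_eval: "recf_eval r_succ_sum (x # y # xs) (Suc (x + y))"
  unfolding r_succ_sum_def
  by (rule recf_eval_Cn1, rule ev_Sc[of _ "[]"], rule recf_eval_Cn2, rule r_add_eval,
      rule recf_eval_Pj0, rule recf_eval_Pj1)

section \<open>Computably enumerable sets\<close>

lemma ce_zero_set:
  assumes "\<And>m n. recf_eval f [m, n] (g m n)"
  shows "ce {n. \<exists>m. g m n = 0}"
  unfolding ce_def
proof (intro exI[of _ "Mn f"] set_eqI iffI; unfold mem_Collect_eq)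
  fix n
  assume "\<exists>m. g m n = 0"
  then have "g (LEAST m. g m n = 0) n = 0" "\<forall>m < (LEAST m. g m n = 0). 0 < g m n"
    by (auto intro: LeastI_ex dest: not_less_Least)
  then show "\<exists>y. recf_eval (Mn f) [n] y"
    using assms by (metis ev_Mn)
next
  fix n
  assume "\<exists>y. recf_eval (Mn f) [n] y"
  then obtain m where "recf_eval (Mn f) [n] m" by blast
  then have "recf_eval f [m, n] 0" by cases auto
  then show "\<exists>m. g m n = 0"
    using assms recf_eval_functional by metis
qed

definition r_bounded_prod :: "recf \<Rightarrow> recf" where
  "r_bounded_prod f = Pr r_one (Cn r_mult [Pj 1, Cn f [Pj 2, Pj 0, Pj 3]])"

lemma r_bounded_prod_eval:
  assumes "\<And>a b c. recf_eval f [a, b, c] (h a b c)"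
  shows "recf_eval (r_bounded_prod f) [j, a, c] (\<Prod>b<j. h a b c)"
proof (induction j)
  case 0
  show ?case unfolding r_bounded_prod_def by (rule ev_Pr0, rule recf_eval_subst, rule r_one_eval, simp)
next
  case (Suc j)
  show ?case unfolding r_bounded_prod_def
    by (rule ev_PrS[OF Suc[unfolded r_bounded_prod_def]], rule recf_eval_subst, rule recf_eval_Cn2,
        rule r_mult_eval, rule recf_eval_Pj1, rule recf_eval_Cn3, rule assms,
        rule recf_eval_Pj2, rule recf_eval_Pj0, rule recf_eval_Pj3, simp)
qed

lemma ce_exists2_zero:
  assumes "\<And>x y n. recf_eval f [x, y, n] (g x y n)"
  shows "ce {n. \<exists>x y. g x y n = 0}"
proof -
  define G where "G m n = (\<Prod>x<m. \<Prod>y<m. g x y n)" for m n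
  have "recf_eval (Cn (r_bounded_prod (r_bounded_prod f)) [Pj 0, Pj 0, Pj 1]) [m, n] (G m n)" for m n
    unfolding G_def
    by (rule recf_eval_Cn3, rule r_bounded_prod_eval, rule r_bounded_prod_eval, rule assms,
        rule recf_eval_Pj0, rule recf_eval_Pj0, rule recf_eval_Pj1)
  then have "ce {n. \<exists>m. G m n = 0}" by (rule ce_zero_set)
  moreover have "(\<exists>m. G m n = 0) \<longleftrightarrow> (\<exists>x y. g x y n = 0)" for n
  proof
    assume "\<exists>x y. g x y n = 0"
    then obtain x y where "g x y n = 0" by blast
    then have "G (Suc (x + y)) n = 0"
      unfolding G_def
      by (metis prod_zero_iff finite_lessThan lessThan_iff less_add_Suc1 less_add_Suc2)
    then show "\<exists>m. G m n = 0" ..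
  qed (auto simp: G_def)
  ultimately show ?thesis by simp
qed

lemma ce_image_union_ranges:
  assumes "\<forall>e\<in>set es. \<exists>f. \<forall>x y z. recf_eval f [x, y, z] (code (e x y))"
  shows "ce (code ` {e x y | e x y. e \<in> set es})"
proof -
  define g where "g x y n = (\<Prod>e\<leftarrow>es. (code (e x y) - n) + (n - code (e x y)))" for x y n
  have "\<exists>f. \<forall>x y n. recf_eval f [x, y, n] (g x y n)"
    using assms unfolding g_def
  proof (induction es)
    case Nil
    show ?case using r_one_eval by auto
  next
    case (Cons e es)
    then obtain f fs where
      "\<forall>x y z. recf_eval f [x, y, z] (code (e x y))"
      "\<forall>x y n. recf_eval fs [x, y, n] (\<Prod>e\<leftarrow>es. (code (e x y) - n) + (n - code (e x y)))"
      by auto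
    then have "recf_eval (Cn r_mult [Cn r_dist [f, Pj 2], fs]) [x, y, n]
        (\<Prod>e\<leftarrow>e # es. (code (e x y) - n) + (n - code (e x y)))" for x y n
      by (auto intro!: recf_eval_subst[OF recf_eval_Cn2[OF r_mult_eval]]
          recf_eval_Cn2[OF r_dist_eval] recf_eval_Pj2)
    then show ?case by blast
  qed
  then obtain f where "\<And>x y n. recf_eval f [x, y, n] (g x y n)" by blast
  then have "ce {n. \<exists>x y. g x y n = 0}" by (rule ce_exists2_zero)
  moreover have "g x y n = 0 \<longleftrightarrow> (\<exists>e\<in>set es. n = code (e x y))" for x y n
    unfolding g_def by (auto simp: prod_list_zero_iff image_iff)
  then have "{n. \<exists>x y. g x y n = 0} = code ` {e x y | e x y. e \<in> set es}"
    by blast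
  ultimately show ?thesis by simp
qed

section \<open>Atomic diagrams and isomorphisms\<close>

lemma diagram_True_Eq_iff: "(True, Eq a c) \<in> diagram L A \<longleftrightarrow> a = c \<and> a \<in> univ A"
  unfolding diagram_def by auto

lemma diagram_False_Eq_iff: "(False, Eq a c) \<in> diagram L A \<longleftrightarrow> a \<noteq> c \<and> a \<in> univ A \<and> c \<in> univ A"
  unfolding diagram_def by auto

lemma diagram_Rl_iff:
  "(b, Rl i xs) \<in> diagram L A \<longleftrightarrow>
     i < length L \<and> xs \<in> tuples (univ A) (L ! i) \<and> (xs \<in> rel A i \<longleftrightarrow> b)"
  unfolding diagram_def by (cases b) auto

lemma diagram_subsetD:
  assumes "diagram L A \<subseteq> diagram L B"
  shows "univ A \<subseteq> univ B"
    and "i < length L \<Longrightarrow> xs \<in> tuples (univ A) (L ! i) \<Longrightarrow> xs \<in> rel A i \<Longrightarrow> xs \<in> rel B i"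
proof -
  show "univ A \<subseteq> univ B"
  proof
    fix a
    assume "a \<in> univ A"
    then have "(True, Eq a a) \<in> diagram L A" by (simp add: diagram_True_Eq_iff)
    with assms have "(True, Eq a a) \<in> diagram L B" by blast
    then show "a \<in> univ B" by (simp add: diagram_True_Eq_iff)
  qed
  assume "i < length L" "xs \<in> tuples (univ A) (L ! i)" "xs \<in> rel A i"
  then have "(True, Rl i xs) \<in> diagram L A" by (simp add: diagram_Rl_iff)
  with assms have "(True, Rl i xs) \<in> diagram L B" by blast
  then show "xs \<in> rel B i" by (simp add: diagram_Rl_iff)
qed

lemma diagram_eq_if_subset_same_univ:
  assumes "diagram L A \<subseteq> diagram L B" and "univ B \<subseteq> univ A"
  shows "diagram L A = diagram L B"
proof
  have univ: "univ A = univ B"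
    using diagram_subsetD(1)[OF assms(1)] assms(2) by blast
  show "diagram L B \<subseteq> diagram L A"
  proof
    fix l
    assume l: "l \<in> diagram L B"
    obtain b at where l_eq: "l = (b, at)" by (cases l)
    show "l \<in> diagram L A"
    proof (cases at)
      case (Eq a c)
      then show ?thesis using l univ unfolding l_eq by (cases b) (auto simp: diagram_True_Eq_iff diagram_False_Eq_iff)
    next
      case (Rl i xs)
      then have "i < length L" "xs \<in> tuples (univ A) (L ! i)"
        using l univ unfolding l_eq by (auto simp: diagram_Rl_iff)
      then have "(xs \<in> rel A i, Rl i xs) \<in> diagram L A"
        by (simp add: diagram_Rl_iff)
      then have "(xs \<in> rel A i, Rl i xs) \<in> diagram L B"
        using assms(1) by blast
      then show ?thesis using l univ unfolding l_eq Rl by (auto simp: diagram_Rl_iff)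
    qed
  qed
qed (fact assms(1))

lemma iso_if_diagram_eq:
  assumes "diagram L A = diagram L B"
  shows "iso L A B"
proof -
  have "univ A = univ B"
    using diagram_subsetD(1)[of L A B] diagram_subsetD(1)[of L B A] assms by blast
  moreover have "xs \<in> rel A i \<longleftrightarrow> xs \<in> rel B i"
    if "i < length L" "xs \<in> tuples (univ A) (L ! i)" for i xs
    using that assms \<open>univ A = univ B\<close> diagram_Rl_iff[of True i xs L A] diagram_Rl_iff[of True i xs L B]
    by simp
  ultimately show ?thesis
    unfolding iso_def by (intro exI[of _ id]) auto
qed

lemma iso_sym:
  assumes "iso L A B"
  shows "iso L B A"
proof -
  obtain f where f: "bij_betw f (univ A) (univ B)"
    "\<forall>i<length L. \<forall>xs\<in>tuples (univ A) (L ! i). xs \<in> rel A i \<longleftrightarrow> map f xs \<in> rel B i"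
    using assms unfolding iso_def by blast
  define g where "g = inv_into (univ A) f"
  have g: "bij_betw g (univ B) (univ A)"
    unfolding g_def by (rule bij_betw_inv_into[OF f(1)])
  have "xs \<in> rel B i \<longleftrightarrow> map g xs \<in> rel A i"
    if "i < length L" "xs \<in> tuples (univ B) (L ! i)" for i xs
  proof -
    have "map g xs \<in> tuples (univ A) (L ! i)"
      using that g unfolding tuples_def bij_betw_def by auto
    moreover have "map f (map g xs) = xs"
      using that f(1) unfolding tuples_def g_def
      by (auto intro!: map_idI simp: bij_betw_inv_into_right)
    ultimately show ?thesis using f(2) that(1) by metis
  qed
  with g show ?thesis unfolding iso_def by blast
qed

lemma iso_trans:
  assumes "iso L A B" and "iso L B C"
  shows "iso L A C"
proof -
  obtain f where f: "bij_betw f (univ A) (univ B)"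
    "\<forall>i<length L. \<forall>xs\<in>tuples (univ A) (L ! i). xs \<in> rel A i \<longleftrightarrow> map f xs \<in> rel B i"
    using assms(1) unfolding iso_def by blast
  obtain g where g: "bij_betw g (univ B) (univ C)"
    "\<forall>i<length L. \<forall>xs\<in>tuples (univ B) (L ! i). xs \<in> rel B i \<longleftrightarrow> map g xs \<in> rel C i"
    using assms(2) unfolding iso_def by blast
  have "map f xs \<in> tuples (univ B) n" if "xs \<in> tuples (univ A) n" for xs n
    using that f(1) unfolding tuples_def bij_betw_def by auto
  with f g show ?thesis
    unfolding iso_def by (intro exI[of _ "g \<circ> f"]) (auto intro: bij_betw_trans)
qed

lemma iso_card: "iso L A B \<Longrightarrow> card (univ A) = card (univ B)"
  unfolding iso_def using bij_betw_same_card by blast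

lemma iso_iff_of_iso:
  assumes "iso L A C" and "iso L B D"
  shows "iso L A B \<longleftrightarrow> iso L C D"
  using iso_trans[OF iso_trans[OF iso_sym[OF assms(1)]] assms(2)]
    iso_trans[OF iso_trans[OF assms(1)] iso_sym[OF assms(2)]] by blast

lemma apply_trans_mono:
  "diagram L A \<subseteq> diagram L B \<Longrightarrow> apply_trans \<Phi> L A \<subseteq> apply_trans \<Phi> L B"
  unfolding apply_trans_def by blast

lemma apply_trans_singletonI:
  "l \<in> diagram L A \<Longrightarrow> ({l}, \<phi>) \<in> \<Phi> \<Longrightarrow> \<phi> \<in> apply_trans \<Phi> L A"
  unfolding apply_trans_def by blast

lemma comp_emb_imageE:
  assumes "comp_emb K L K' L' \<Phi>" and "A \<in> K"
  obtains B where "B \<in> K'" and "apply_trans \<Phi> L A = diagram L' B"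
proof -
  have "\<forall>A\<in>K. \<exists>B\<in>K'. apply_trans \<Phi> L A = diagram L' B"
    using assms(1) unfolding comp_emb_def comp_trans_def by (elim conjE)
  with assms(2) that show thesis by blast
qed

lemma comp_emb_isoD:
  assumes "comp_emb K L K' L' \<Phi>" and "A \<in> K" "A' \<in> K" "B \<in> K'" "B' \<in> K'"
    and "apply_trans \<Phi> L A = diagram L' B" "apply_trans \<Phi> L A' = diagram L' B'"
  shows "iso L A A' \<longleftrightarrow> iso L' B B'"
  using conjunct2[OF assms(1)[unfolded comp_emb_def], rule_format, OF assms(2-7)] .

section \<open>Finite orders of natural numbers\<close>

definition nat_order :: "nat set \<Rightarrow> strc" where
  "nat_order U = \<lparr>univ = U, rel = (\<lambda>i. if i = 0 then {[a, c] | a c. a \<in> U \<and> c \<in> U \<and> a < c} else {})\<rparr>"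

lemma univ_nat_order [simp]: "univ (nat_order U) = U"
  by (simp add: nat_order_def)

lemma rel_nat_order_0: "[a, c] \<in> rel (nat_order U) 0 \<longleftrightarrow> a \<in> U \<and> c \<in> U \<and> a < c"
  by (simp add: nat_order_def)

lemma tuples_2_iff: "xs \<in> tuples U 2 \<longleftrightarrow> (\<exists>a c. xs = [a, c] \<and> a \<in> U \<and> c \<in> U)"
  unfolding tuples_def by (auto simp: numeral_2_eq_2 length_Suc_conv)

lemma diagram_nat_order:
  "diagram L_FLO (nat_order U) =
     {(True, Eq a a) | a. a \<in> U} \<union> {(False, Eq a c) | a c. a \<in> U \<and> c \<in> U \<and> a \<noteq> c}
   \<union> {(a < c, Rl 0 [a, c]) | a c. a \<in> U \<and> c \<in> U}"
  unfolding diagram_def L_FLO_def by (auto simp: nat_order_def tuples_2_iff)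

lemma nat_order_in_FLO: "U \<noteq> {} \<Longrightarrow> finite U \<Longrightarrow> nat_order U \<in> FLO"
  unfolding FLO_def is_struct_def L_FLO_def by (auto simp: nat_order_def tuples_2_iff)

lemma diagram_nat_order_mono: "U \<subseteq> V \<Longrightarrow> diagram L_FLO (nat_order U) \<subseteq> diagram L_FLO (nat_order V)"
  unfolding diagram_nat_order by blast

lemma iso_nat_orderI:
  assumes "bij_betw f U V" and "\<And>a c. a \<in> U \<Longrightarrow> c \<in> U \<Longrightarrow> f a < f c \<longleftrightarrow> a < c"
  shows "iso L_FLO (nat_order U) (nat_order V)"
proof -
  have "\<forall>xs\<in>tuples U 2. xs \<in> rel (nat_order U) 0 \<longleftrightarrow> map f xs \<in> rel (nat_order V) 0"
    using assms bij_betwE by (fastforce simp: tuples_2_iff rel_nat_order_0)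
  then show ?thesis
    unfolding iso_def L_FLO_def by (intro exI[of _ f]) (simp add: assms(1))
qed

lemma iso_nat_order_iff:
  assumes "finite U" and "finite V"
  shows "iso L_FLO (nat_order U) (nat_order V) \<longleftrightarrow> card U = card V"
proof
  assume "iso L_FLO (nat_order U) (nat_order V)"
  then show "card U = card V" by (auto dest: iso_card simp: nat_order_def)
next
  assume card: "card U = card V"
  obtain g where g: "bij_betw g {..<card U} U" "strict_mono_on {..<card U} g"
    using ex_bij_betw_strict_mono_card[OF assms(1)] by blast
  obtain h where h: "bij_betw h {..<card U} V" "strict_mono_on {..<card U} h"
    using ex_bij_betw_strict_mono_card[OF assms(2)] card by metis
  define g' where "g' = inv_into {..<card U} g"
  have g': "bij_betw g' U {..<card U}" "\<And>a. a \<in> U \<Longrightarrow> g (g' a) = a"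
    using g(1) unfolding g'_def by (auto simp: bij_betw_inv_into bij_betw_inv_into_right)
  show "iso L_FLO (nat_order U) (nat_order V)"
  proof (rule iso_nat_orderI)
    show "bij_betw (h \<circ> g') U V" using g'(1) h(1) by (rule bij_betw_trans)
    fix a c
    assume "a \<in> U" "c \<in> U"
    then have "g' a \<in> {..<card U}" "g' c \<in> {..<card U}" using g'(1) bij_betwE by blast+
    then show "(h \<circ> g') a < (h \<circ> g') c \<longleftrightarrow> a < c"
      using strict_mono_on_less[OF h(2)] strict_mono_on_less[OF g(2)] g'(2) \<open>a \<in> U\<close> \<open>c \<in> U\<close>
      by (metis comp_apply)
  qed
qed

section \<open>Prime fields\<close>

lemma PF_iso_Zp:
  assumes "A \<in> PF"
  shows "iso L_PF (Zp (card (univ A))) A" and "prime (card (univ A))"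
proof -
  obtain p where p: "prime p" "iso L_PF (Zp p) A"
    using assms unfolding PF_def by blast
  moreover have "card (univ A) = p"
    using iso_card[OF p(2)] by (simp add: Zp_def)
  ultimately show "iso L_PF (Zp (card (univ A))) A" "prime (card (univ A))" by simp_all
qed

lemma PF_finite_nonempty:
  assumes "A \<in> PF"
  shows "finite (univ A)" and "univ A \<noteq> {}"
proof -
  have "0 < card (univ A)" using PF_iso_Zp(2)[OF assms] prime_gt_0_nat by blast
  then show "finite (univ A)" "univ A \<noteq> {}" by (simp_all add: card_gt_0_iff)
qed

lemma iso_PF_iff:
  assumes "A \<in> PF" and "B \<in> PF"
  shows "iso L_PF A B \<longleftrightarrow> card (univ A) = card (univ B)"
proof
  assume "card (univ A) = card (univ B)"
  then have "iso L_PF (Zp (card (univ A))) B" using PF_iso_Zp(1)[OF assms(2)] by simp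
  then show "iso L_PF A B" by (rule iso_trans[OF iso_sym[OF PF_iso_Zp(1)[OF assms(1)]]])
qed (rule iso_card)

lemma iso_Zp_E:
  assumes "iso L_PF (Zp p) B"
  obtains g where "\<And>k. k < p \<Longrightarrow> g k \<in> univ B"
    and "\<And>a. a \<in> univ B \<Longrightarrow> \<exists>k<p. a = g k"
    and "\<And>a b c. a < p \<Longrightarrow> b < p \<Longrightarrow> c < p \<Longrightarrow> [g a, g b, g c] \<in> rel B 0 \<longleftrightarrow> c = (a + b) mod p"
    and "\<And>a. a < p \<Longrightarrow> [g a] \<in> rel B 3 \<longleftrightarrow> a = 1"
proof -
  obtain g where g: "bij_betw g {0..<p} (univ B)"
    "\<forall>i<4. \<forall>xs\<in>tuples {0..<p} (L_PF ! i). xs \<in> rel (Zp p) i \<longleftrightarrow> map g xs \<in> rel B i"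
    using assms unfolding iso_def by (auto simp: Zp_def L_PF_def)
  show thesis
  proof (rule that)
    show "g k \<in> univ B" if "k < p" for k
      using that g(1) by (auto dest: bij_betwE)
    show "\<exists>k<p. a = g k" if "a \<in> univ B" for a
    proof -
      have "a \<in> g ` {0..<p}" using that g(1) by (simp add: bij_betw_def)
      then show ?thesis by auto
    qed
  next
    fix a b c
    assume "a < p" "b < p" "c < p"
    then show "[g a, g b, g c] \<in> rel B 0 \<longleftrightarrow> c = (a + b) mod p"
      using g(2)[rule_format, of 0 "[a, b, c]"] by (auto simp: L_PF_def tuples_def Zp_def)
  next
    fix a
    assume "a < p"
    then show "[g a] \<in> rel B 3 \<longleftrightarrow> a = 1"
      using g(2)[rule_format, of 3 "[a]"] by (auto simp: L_PF_def tuples_def Zp_def)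
  qed
qed

lemma PF_one_add_total:
  assumes "A \<in> PF"
  obtains u where "u \<in> univ A" and "[u] \<in> rel A 3"
    and "\<And>a. a \<in> univ A \<Longrightarrow> \<exists>c\<in>univ A. [a, u, c] \<in> rel A 0"
proof -
  let ?p = "card (univ A)"
  obtain g where g: "\<And>k. k < ?p \<Longrightarrow> g k \<in> univ A" "\<And>a. a \<in> univ A \<Longrightarrow> \<exists>k<?p. a = g k"
    "\<And>a b c. a < ?p \<Longrightarrow> b < ?p \<Longrightarrow> c < ?p \<Longrightarrow> [g a, g b, g c] \<in> rel A 0 \<longleftrightarrow> c = (a + b) mod ?p"
    "\<And>a. a < ?p \<Longrightarrow> [g a] \<in> rel A 3 \<longleftrightarrow> a = 1"
    using iso_Zp_E[OF PF_iso_Zp(1)[OF assms(1)]] by blast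
  have p: "1 < ?p" using PF_iso_Zp(2)[OF assms(1)] prime_gt_1_nat by blast
  show thesis
  proof (rule that[of "g 1"])
    show "g 1 \<in> univ A" "[g 1] \<in> rel A 3" using g(1,4) p by simp_all
    fix a
    assume "a \<in> univ A"
    then obtain k where "k < ?p" "a = g k" using g(2) by blast
    moreover have "(k + 1) mod ?p < ?p" using p by simp
    ultimately have "g ((k + 1) mod ?p) \<in> univ A" "[a, g 1, g ((k + 1) mod ?p)] \<in> rel A 0"
      using g(1,3) p by simp_all
    then show "\<exists>c\<in>univ A. [a, g 1, c] \<in> rel A 0" by blast
  qed
qed

lemma PF_generated_by_one:
  assumes "A \<in> PF" and "S \<subseteq> univ A" and "u \<in> S" and "[u] \<in> rel A 3"
    and "\<And>a. a \<in> S \<Longrightarrow> \<exists>c\<in>S. [a, u, c] \<in> rel A 0"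
  shows "S = univ A"
proof -
  let ?p = "card (univ A)"
  obtain g where g: "\<And>k. k < ?p \<Longrightarrow> g k \<in> univ A" "\<And>a. a \<in> univ A \<Longrightarrow> \<exists>k<?p. a = g k"
    "\<And>a b c. a < ?p \<Longrightarrow> b < ?p \<Longrightarrow> c < ?p \<Longrightarrow> [g a, g b, g c] \<in> rel A 0 \<longleftrightarrow> c = (a + b) mod ?p"
    "\<And>a. a < ?p \<Longrightarrow> [g a] \<in> rel A 3 \<longleftrightarrow> a = 1"
    using iso_Zp_E[OF PF_iso_Zp(1)[OF assms(1)]] by blast
  have p: "1 < ?p" using PF_iso_Zp(2)[OF assms(1)] prime_gt_1_nat by blast
  have "u = g 1"
    using g(2)[of u] g(4) assms(2-4) by blast
  have "g (Suc k mod ?p) \<in> S" for k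
  proof (induction k)
    case 0
    then show ?case using \<open>u = g 1\<close> assms(3) p by simp
  next
    case (Suc k)
    then obtain c where c: "c \<in> S" "[g (Suc k mod ?p), g 1, c] \<in> rel A 0"
      using assms(5) \<open>u = g 1\<close> by blast
    then obtain c' where "c' < ?p" "c = g c'" using g(2) assms(2) by blast
    with c(2) have "c' = Suc (Suc k) mod ?p"
      using g(3)[of "Suc k mod ?p" 1 c'] p by (simp add: mod_Suc_eq)
    then show ?case using c \<open>c = g c'\<close> by simp
  qed
  moreover have "Suc (k + ?p - 1) mod ?p = k" if "k < ?p" for k
    using that p by simp
  ultimately have "g k \<in> S" if "k < ?p" for k
    using that by metis
  then show ?thesis
    using assms(2) g(2) by blast
qed

lemma PF_iso_if_diagram_subset:
  assumes "A \<in> PF" and "B \<in> PF" and sub: "diagram L_PF A \<subseteq> diagram L_PF B"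
  shows "iso L_PF A B"
proof -
  have rel: "xs \<in> rel B i" if "i < 4" "xs \<in> tuples (univ A) (L_PF ! i)" "xs \<in> rel A i" for i xs
    using diagram_subsetD(2)[OF sub] that by (simp add: L_PF_def)
  obtain u where u: "u \<in> univ A" "[u] \<in> rel A 3"
    and add: "\<And>a. a \<in> univ A \<Longrightarrow> \<exists>c\<in>univ A. [a, u, c] \<in> rel A 0"
    using PF_one_add_total[OF assms(1)] by blast
  have "univ A = univ B"
  proof (rule PF_generated_by_one[OF assms(2) diagram_subsetD(1)[OF sub] u(1)])
    show "[u] \<in> rel B 3" using rel[of 3 "[u]"] u by (simp add: L_PF_def tuples_def)
    fix a
    assume "a \<in> univ A"
    then obtain c where "c \<in> univ A" "[a, u, c] \<in> rel A 0" using add by blast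
    then show "\<exists>c\<in>univ A. [a, u, c] \<in> rel B 0"
      using rel[of 0 "[a, u, c]"] u(1) \<open>a \<in> univ A\<close> by (auto simp: L_PF_def tuples_def)
  qed
  then have "diagram L_PF A = diagram L_PF B"
    using diagram_eq_if_subset_same_univ[OF sub] by simp
  then show ?thesis by (rule iso_if_diagram_eq)
qed

section \<open>The embedding of PF into FLO\<close>

definition Phi_order :: "(lit set \<times> lit) set" where
  "Phi_order =
      {({(True, Eq a a)}, (True, Eq a a)) | a. True}
    \<union> {({(True, Eq a a)}, (False, Rl 0 [a, a])) | a. True}
    \<union> {({(False, Eq a c)}, (False, Eq a c)) | a c. a \<noteq> c}
    \<union> {({(False, Eq a c)}, (a < c, Rl 0 [a, c])) | a c. a \<noteq> c}"

lemma Phi_orderI: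
  "({(True, Eq a a)}, (True, Eq a a)) \<in> Phi_order"
  "({(True, Eq a a)}, (False, Rl 0 [a, a])) \<in> Phi_order"
  "a \<noteq> c \<Longrightarrow> ({(False, Eq a c)}, (False, Eq a c)) \<in> Phi_order"
  "a \<noteq> c \<Longrightarrow> ({(False, Eq a c)}, (a < c, Rl 0 [a, c])) \<in> Phi_order"
  unfolding Phi_order_def by blast+

lemma Phi_orderE:
  assumes "p \<in> Phi_order"
  obtains (refl) a where "p = ({(True, Eq a a)}, (True, Eq a a))"
    | (irrefl) a where "p = ({(True, Eq a a)}, (False, Rl 0 [a, a]))"
    | (neq) a c where "a \<noteq> c" "p = ({(False, Eq a c)}, (False, Eq a c))"
    | (less) a c where "a \<noteq> c" "p = ({(False, Eq a c)}, (a < c, Rl 0 [a, c]))"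
  using assms unfolding Phi_order_def by blast

lemma nat_neq_SucE:
  assumes "(a::nat) \<noteq> c"
  obtains (less) y where "c = Suc (a + y)" | (greater) x where "a = Suc (x + c)"
  using assms by (metis add.commute less_imp_Suc_add linorder_neqE_nat)

text \<open>The pairs \<open>a < c\<close> are enumerated as \<open>(x, x + y + 1)\<close>,
  the pairs \<open>a > c\<close> as \<open>(x + y + 1, y)\<close>.\<close>

definition Phi_order_enum :: "(nat \<Rightarrow> nat \<Rightarrow> lit set \<times> lit) list" where
  "Phi_order_enum =
     [\<lambda>x y. ({(True, Eq x x)}, (True, Eq x x)),
      \<lambda>x y. ({(True, Eq x x)}, (False, Rl 0 [x, x])),
      \<lambda>x y. ({(False, Eq x (Suc (x + y)))}, (False, Eq x (Suc (x + y)))),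
      \<lambda>x y. ({(False, Eq (Suc (x + y)) y)}, (False, Eq (Suc (x + y)) y)),
      \<lambda>x y. ({(False, Eq x (Suc (x + y)))}, (True, Rl 0 [x, Suc (x + y)])),
      \<lambda>x y. ({(False, Eq (Suc (x + y)) y)}, (False, Rl 0 [Suc (x + y), y]))]"

lemma Phi_order_eq_enum: "Phi_order = {e x y | e x y. e \<in> set Phi_order_enum}"
proof (intro equalityI subsetI)
  have enum: "p \<in> {e x y | e x y. e \<in> set Phi_order_enum}"
    if "p = (Phi_order_enum ! i) x y" "i < length Phi_order_enum" for p i x y
    using that nth_mem by blast
  fix p
  assume "p \<in> Phi_order"
  then show "p \<in> {e x y | e x y. e \<in> set Phi_order_enum}"
  proof (cases rule: Phi_orderE)
    case (refl a)
    then show ?thesis by (intro enum[of _ 0 a 0]) (simp_all add: Phi_order_enum_def)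
  next
    case (irrefl a)
    then show ?thesis by (intro enum[of _ 1 a 0]) (simp_all add: Phi_order_enum_def)
  next
    case (neq a c)
    from \<open>a \<noteq> c\<close> show ?thesis
    proof (cases rule: nat_neq_SucE)
      case (less y)
      with neq show ?thesis by (intro enum[of _ 2 a y]) (simp_all add: Phi_order_enum_def)
    next
      case (greater x)
      with neq show ?thesis by (intro enum[of _ 3 x c]) (simp_all add: Phi_order_enum_def)
    qed
  next
    case (less a c)
    from \<open>a \<noteq> c\<close> show ?thesis
    proof (cases rule: nat_neq_SucE)
      case (less y)
      with \<open>p = _\<close> show ?thesis by (intro enum[of _ 4 a y]) (simp_all add: Phi_order_enum_def)
    next
      case (greater x)
      with \<open>p = _\<close> show ?thesis by (intro enum[of _ 5 x c]) (simp_all add: Phi_order_enum_def)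
    qed
  qed
next
  fix p
  assume "p \<in> {e x y | e x y. e \<in> set Phi_order_enum}"
  then obtain e x y where "e \<in> set Phi_order_enum" "p = e x y" by blast
  then show "p \<in> Phi_order"
    using Phi_orderI(3,4)[of x "Suc (x + y)"] Phi_orderI(3,4)[of "Suc (x + y)" y]
    by (auto simp: Phi_order_enum_def intro: Phi_orderI(1,2))
qed

lemma ce_Phi_order: "ce (pair_code ` Phi_order)"
  unfolding Phi_order_eq_enum
  by (rule ce_image_union_ranges)
     (auto simp: Phi_order_enum_def intro!: exI allI r_code_pair_eval r_code_Eq_eval r_code_Rl0_eval
       recf_eval_Pj0 recf_eval_Pj1 r_succ_sum_eval)

lemma apply_trans_Phi_order: "apply_trans Phi_order L A = diagram L_FLO (nat_order (univ A))"
proof (intro equalityI subsetI)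
  fix l
  assume "l \<in> apply_trans Phi_order L A"
  then obtain \<alpha> where \<alpha>: "\<alpha> \<subseteq> diagram L A" "(\<alpha>, l) \<in> Phi_order"
    unfolding apply_trans_def by blast
  from \<alpha>(2) show "l \<in> diagram L_FLO (nat_order (univ A))"
    by (cases rule: Phi_orderE)
       (use \<alpha>(1) in \<open>auto simp: diagram_nat_order diagram_True_Eq_iff diagram_False_Eq_iff\<close>)
next
  fix l
  assume "l \<in> diagram L_FLO (nat_order (univ A))"
  then consider (refl) a where "a \<in> univ A" "l = (True, Eq a a)"
    | (neq) a c where "a \<in> univ A" "c \<in> univ A" "a \<noteq> c" "l = (False, Eq a c)"
    | (order) a c where "a \<in> univ A" "c \<in> univ A" "l = (a < c, Rl 0 [a, c])"
    unfolding diagram_nat_order by blast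
  then show "l \<in> apply_trans Phi_order L A"
  proof cases
    case (refl a)
    then show ?thesis
      by (intro apply_trans_singletonI[of "(True, Eq a a)"]) (simp_all add: diagram_True_Eq_iff Phi_orderI)
  next
    case (neq a c)
    then show ?thesis
      by (intro apply_trans_singletonI[of "(False, Eq a c)"]) (simp_all add: diagram_False_Eq_iff Phi_orderI)
  next
    case (order a c)
    show ?thesis
    proof (cases "a = c")
      case True
      with order show ?thesis
        by (intro apply_trans_singletonI[of "(True, Eq a a)"]) (simp_all add: diagram_True_Eq_iff Phi_orderI)
    next
      case False
      with order show ?thesis
        by (intro apply_trans_singletonI[of "(False, Eq a c)"]) (simp_all add: diagram_False_Eq_iff Phi_orderI)
    qed
  qed
qed

lemma Phi_order_premises:
  assumes "(\<alpha>, \<phi>) \<in> Phi_order"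
  shows "finite \<alpha>" and "\<exists>F. is_struct L F \<and> finite (univ F) \<and> \<alpha> \<subseteq> diagram L F"
    and "lang_lit L_FLO \<phi>"
proof -
  obtain a c where \<alpha>: "\<alpha> = {(a = c, Eq a c)}" and "lang_lit L_FLO \<phi>"
    using assms
  proof (cases rule: Phi_orderE)
    case (refl a)
    then show thesis using that[of a a] by simp
  next
    case (irrefl a)
    then show thesis using that[of a a] by (simp add: L_FLO_def)
  next
    case (neq a c)
    then show thesis using that[of a c] by simp
  next
    case (less a c)
    then show thesis using that[of a c] by (simp add: L_FLO_def)
  qed
  let ?F = "\<lparr>univ = {a, c}, rel = \<lambda>_. {}\<rparr>"
  have "is_struct L ?F" "finite (univ ?F)" by (simp_all add: is_struct_def)
  moreover have "\<alpha> \<subseteq> diagram L ?F"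
    unfolding \<alpha> by (cases "a = c") (simp_all add: diagram_True_Eq_iff diagram_False_Eq_iff)
  ultimately show "\<exists>F. is_struct L F \<and> finite (univ F) \<and> \<alpha> \<subseteq> diagram L F" by blast
  show "finite \<alpha>" "lang_lit L_FLO \<phi>" by (simp add: \<alpha>) fact
qed

lemma iso_images_Phi_order:
  assumes "apply_trans Phi_order L A = diagram L_FLO B" "apply_trans Phi_order L A' = diagram L_FLO B'"
    and "finite (univ A)" "finite (univ A')"
  shows "iso L_FLO B B' \<longleftrightarrow> card (univ A) = card (univ A')"
proof -
  have "iso L_FLO B (nat_order (univ A))" "iso L_FLO B' (nat_order (univ A'))"
    using assms(1,2) by (simp_all add: apply_trans_Phi_order iso_if_diagram_eq)
  then have "iso L_FLO B B' \<longleftrightarrow> iso L_FLO (nat_order (univ A)) (nat_order (univ A'))"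
    by (rule iso_iff_of_iso)
  also have "\<dots> \<longleftrightarrow> card (univ A) = card (univ A')"
    using assms(3,4) by (rule iso_nat_order_iff)
  finally show ?thesis .
qed

lemma Phi_order_comp_emb: "comp_emb PF L_PF FLO L_FLO Phi_order"
  unfolding comp_emb_def comp_trans_def
proof (intro conjI ballI impI)
  show "ce (pair_code ` Phi_order)" by (rule ce_Phi_order)
next
  fix p
  assume "p \<in> Phi_order"
  moreover obtain \<alpha> \<phi> where "p = (\<alpha>, \<phi>)" by (cases p)
  ultimately show "case p of (\<alpha>, \<phi>) \<Rightarrow> finite \<alpha> \<and>
      (\<exists>F. is_struct L_PF F \<and> finite (univ F) \<and> \<alpha> \<subseteq> diagram L_PF F) \<and> lang_lit L_FLO \<phi>"
    using Phi_order_premises[of \<alpha> \<phi>] by simp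
next
  fix A
  assume "A \<in> PF"
  then have "nat_order (univ A) \<in> FLO"
    using PF_finite_nonempty by (simp add: nat_order_in_FLO)
  then show "\<exists>B\<in>FLO. apply_trans Phi_order L_PF A = diagram L_FLO B"
    using apply_trans_Phi_order by blast
next
  fix A A' B B'
  assume "A \<in> PF" "A' \<in> PF"
    and "apply_trans Phi_order L_PF A = diagram L_FLO B" "apply_trans Phi_order L_PF A' = diagram L_FLO B'"
  then show "iso L_PF A A' \<longleftrightarrow> iso L_FLO B B'"
    by (simp add: iso_images_Phi_order iso_PF_iff PF_finite_nonempty)
qed

section \<open>Monotonicity of computable transformations\<close>

lemma not_c_le_FLO_PF: "\<not> c_le FLO L_FLO PF L_PF"
proof
  assume "c_le FLO L_FLO PF L_PF"
  then obtain \<Phi> where \<Phi>: "comp_emb FLO L_FLO PF L_PF \<Phi>" unfolding c_le_def by blast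
  have FLO: "nat_order {0} \<in> FLO" "nat_order {0, 1} \<in> FLO"
    by (simp_all add: nat_order_in_FLO)
  obtain B1 where B1: "B1 \<in> PF" "apply_trans \<Phi> L_FLO (nat_order {0}) = diagram L_PF B1"
    using comp_emb_imageE[OF \<Phi> FLO(1)] by blast
  obtain B2 where B2: "B2 \<in> PF" "apply_trans \<Phi> L_FLO (nat_order {0, 1}) = diagram L_PF B2"
    using comp_emb_imageE[OF \<Phi> FLO(2)] by blast
  have "diagram L_PF B1 \<subseteq> diagram L_PF B2"
    using apply_trans_mono[OF diagram_nat_order_mono[of "{0}" "{0, 1}"], of \<Phi>]
    unfolding B1(2) B2(2) by simp
  then have "iso L_PF B1 B2" using PF_iso_if_diagram_subset B1(1) B2(1) by blast
  then have "iso L_FLO (nat_order {0}) (nat_order {0, 1})"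
    using comp_emb_isoD[OF \<Phi> FLO B1(1) B2(1) B1(2) B2(2)] by blast
  then show False by (simp add: iso_nat_order_iff)
qed

theorem proposition2p1:
  shows "c_le PF L_PF FLO L_FLO \<and> \<not> c_le FLO L_FLO PF L_PF"
  using Phi_order_comp_emb not_c_le_FLO_PF unfolding c_le_def by blast

end
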